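(* Let $G$ be a group and for $g\in G$ let $\mathcal{C}(G)_g=\mathcal{C}(G)\setminus\{\{g\}\}$ (the coset poset with the singleton coset $\{g\}$ removed). If for some $g\in G$ and some $n\geq 0$ we have $\tilde{H}_n(|\mathcal{C}(G)_g|;\mathbb{Z})=0$, then there is a surjection $\tilde{H}_{n+1}(|\mathcal{C}(G)|;\mathbb{Z})\twoheadrightarrow \tilde{H}_n(|L(G)|;\mathbb{Z})$.
   Context: For a group $G$, the coset poset $\mathcal{C}(G)$ is the set of left cosets of all proper subgroups of $G$ (including the trivial subgroup), ordered by inclusion; $L(G)$ is the poset of proper nontrivial subgroups of $G$ ordered by inclusion; $|P|$ denotes the geometric realization of the order complex (chains) of $P$; $\tilde H_*$ is reduced homology. *)

theory Defs
  imports "HOL-Homology.Homology" "HOL-Algebra.Algebra"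
begin

text \<open>The order complex has as simplices the finite nonempty chains of P.
  Points of the geometric realization are finitely supported functions
  x :: 'v \<Rightarrow> real, nonnegative, summing to 1, whose support is a chain of P.
  The topology is the weak (coherent) topology: U is open iff its trace on
  every closed simplex is open in the Euclidean topology of that simplex
  (which is the subspace topology inherited from the product topology).\<close>

definition is_chain :: "('v \<Rightarrow> 'v \<Rightarrow> bool) \<Rightarrow> 'v set \<Rightarrow> bool" where
  "is_chain ord S \<longleftrightarrow> (\<forall>x\<in>S. \<forall>y\<in>S. ord x y \<or> ord y x)"

definition realization_carrier :: "'v set \<Rightarrow> ('v \<Rightarrow> 'v \<Rightarrow> bool) \<Rightarrow> ('v \<Rightarrow> real) set" where
  "realization_carrier P ord =
     {x. (\<forall>v. 0 \<le> x v) \<and> finite {v. x v \<noteq> 0} \<and> {v. x v \<noteq> 0} \<subseteq> P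
         \<and> is_chain ord {v. x v \<noteq> 0} \<and> sum x {v. x v \<noteq> 0} = 1}"

definition closed_simplex :: "'v set \<Rightarrow> ('v \<Rightarrow> 'v \<Rightarrow> bool) \<Rightarrow> 'v set \<Rightarrow> ('v \<Rightarrow> real) set" where
  "closed_simplex P ord \<sigma> = {x \<in> realization_carrier P ord. {v. x v \<noteq> 0} \<subseteq> \<sigma>}"

definition realization :: "'v set \<Rightarrow> ('v \<Rightarrow> 'v \<Rightarrow> bool) \<Rightarrow> ('v \<Rightarrow> real) topology" where
  "realization P ord = topology (\<lambda>U. U \<subseteq> realization_carrier P ord \<and>
     (\<forall>\<sigma>. finite \<sigma> \<and> \<sigma> \<subseteq> P \<and> is_chain ord \<sigma> \<longrightarrow>
        openin (subtopology (powertop_real UNIV) (closed_simplex P ord \<sigma>))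
               (U \<inter> closed_simplex P ord \<sigma>)))"

lemma istopology_realization:
  "istopology (\<lambda>U. U \<subseteq> realization_carrier P ord \<and>
     (\<forall>\<sigma>. finite \<sigma> \<and> \<sigma> \<subseteq> P \<and> is_chain ord \<sigma> \<longrightarrow>
        openin (subtopology (powertop_real UNIV) (closed_simplex P ord \<sigma>))
               (U \<inter> closed_simplex P ord \<sigma>)))"
  unfolding istopology_def
proof (rule conjI; intro allI impI)
  fix S T assume S: "S \<subseteq> realization_carrier P ord \<and> (\<forall>\<sigma>. finite \<sigma> \<and> \<sigma> \<subseteq> P \<and> is_chain ord \<sigma> \<longrightarrow>
        openin (subtopology (powertop_real UNIV) (closed_simplex P ord \<sigma>)) (S \<inter> closed_simplex P ord \<sigma>))"
    and T: "T \<subseteq> realization_carrier P ord \<and> (\<forall>\<sigma>. finite \<sigma> \<and> \<sigma> \<subseteq> P \<and> is_chain ord \<sigma> \<longrightarrow>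
        openin (subtopology (powertop_real UNIV) (closed_simplex P ord \<sigma>)) (T \<inter> closed_simplex P ord \<sigma>))"
  show "S \<inter> T \<subseteq> realization_carrier P ord \<and> (\<forall>\<sigma>. finite \<sigma> \<and> \<sigma> \<subseteq> P \<and> is_chain ord \<sigma> \<longrightarrow>
        openin (subtopology (powertop_real UNIV) (closed_simplex P ord \<sigma>)) (S \<inter> T \<inter> closed_simplex P ord \<sigma>))"
  proof (intro conjI allI impI)
    show "S \<inter> T \<subseteq> realization_carrier P ord" using S by blast
  next
    fix \<sigma> assume h: "finite \<sigma> \<and> \<sigma> \<subseteq> P \<and> is_chain ord \<sigma>"
    have "S \<inter> T \<inter> closed_simplex P ord \<sigma> = (S \<inter> closed_simplex P ord \<sigma>) \<inter> (T \<inter> closed_simplex P ord \<sigma>)" by blast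
    then show "openin (subtopology (powertop_real UNIV) (closed_simplex P ord \<sigma>)) (S \<inter> T \<inter> closed_simplex P ord \<sigma>)"
      using S T h by (simp add: openin_Int)
  qed
next
  fix K assume K: "\<forall>S\<in>K. S \<subseteq> realization_carrier P ord \<and> (\<forall>\<sigma>. finite \<sigma> \<and> \<sigma> \<subseteq> P \<and> is_chain ord \<sigma> \<longrightarrow>
        openin (subtopology (powertop_real UNIV) (closed_simplex P ord \<sigma>)) (S \<inter> closed_simplex P ord \<sigma>))"
  show "\<Union>K \<subseteq> realization_carrier P ord \<and> (\<forall>\<sigma>. finite \<sigma> \<and> \<sigma> \<subseteq> P \<and> is_chain ord \<sigma> \<longrightarrow>
        openin (subtopology (powertop_real UNIV) (closed_simplex P ord \<sigma>)) (\<Union>K \<inter> closed_simplex P ord \<sigma>))"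
  proof (intro conjI allI impI)
    show "\<Union>K \<subseteq> realization_carrier P ord" using K by blast
  next
    fix \<sigma> assume h: "finite \<sigma> \<and> \<sigma> \<subseteq> P \<and> is_chain ord \<sigma>"
    have eqU: "\<Union>K \<inter> closed_simplex P ord \<sigma> = \<Union>((\<lambda>S. S \<inter> closed_simplex P ord \<sigma>) ` K)" by blast
    show "openin (subtopology (powertop_real UNIV) (closed_simplex P ord \<sigma>)) (\<Union>K \<inter> closed_simplex P ord \<sigma>)"
    proof -
      have "openin (subtopology (powertop_real UNIV) (closed_simplex P ord \<sigma>)) (\<Union>((\<lambda>S. S \<inter> closed_simplex P ord \<sigma>) ` K))"
        using K h by (intro openin_Union) blast
      then show ?thesis by (simp only: eqU)
    qed
  qed
qed

lemma topspace_realization: "topspace (realization P ord) = realization_carrier P ord"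
proof -
  have "openin (realization P ord) (realization_carrier P ord)"
  proof -
    have o: "\<And>S. openin (subtopology (powertop_real UNIV) S) S"
      by (simp add: openin_subtopology_refl)
    have i: "\<And>\<sigma>. realization_carrier P ord \<inter> closed_simplex P ord \<sigma> = closed_simplex P ord \<sigma>"
      by (auto simp: closed_simplex_def)
    show ?thesis
      unfolding realization_def topology_inverse'[OF istopology_realization]
      by (intro conjI subset_refl allI impI) (simp only: i o)
  qed
  moreover have "\<And>U. openin (realization P ord) U \<Longrightarrow> U \<subseteq> realization_carrier P ord"
    unfolding realization_def topology_inverse'[OF istopology_realization] by blast
  ultimately show ?thesis by (auto simp: topspace_def)
qed

definition coset_poset :: "('a, 'b) monoid_scheme \<Rightarrow> 'a set set" where
  "coset_poset G = {g <#\<^bsub>G\<^esub> H | g H. g \<in> carrier G \<and> subgroup H G \<and> H \<noteq> carrier G}"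

definition subgroup_poset :: "('a, 'b) monoid_scheme \<Rightarrow> 'a set set" where
  "subgroup_poset G = {H. subgroup H G \<and> H \<noteq> carrier G \<and> H \<noteq> {\<one>\<^bsub>G\<^esub>}}"

end

theory Submission
  imports Defs "HOL-Analysis.Analysis"
begin

text \<open>Let \<open>v = {g}\<close>, a vertex of \<open>X = |C(G)|\<close>, and write \<open>x v\<close> for the barycentric
  coordinate of a point \<open>x\<close> at \<open>v\<close>. The open sets \<open>S = {x v < 1}\<close> and \<open>U = {x v > 0}\<close>
  cover \<open>X\<close>. Radial projection away from \<open>v\<close> deformation retracts \<open>S\<close> onto
  \<open>|C(G)_g|\<close>, the open star \<open>U\<close> contracts straight to \<open>v\<close>, and \<open>S \<inter> U\<close> deformation
  retracts onto the link of \<open>v\<close>. The cosets comparable with \<open>{g}\<close> are exactly the \<open>gH\<close>,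
  and \<open>H \<mapsto> gH\<close> is an order isomorphism, so the link is \<open>|L(G)|\<close>. In the exact sequence of
  the pair \<open>(X, S)\<close> the map \<open>H\<^sub>n\<^sub>+\<^sub>1(X) \<rightarrow> H\<^sub>n\<^sub>+\<^sub>1(X, S)\<close> is onto because \<open>H\<^sub>n(S) = 0\<close>,
  and excising \<open>X - U\<close> and using that \<open>U\<close> is contractible gives
  \<open>H\<^sub>n\<^sub>+\<^sub>1(X, S) \<cong> H\<^sub>n\<^sub>+\<^sub>1(U, S \<inter> U) \<cong> H\<^sub>n(S \<inter> U) \<cong> H\<^sub>n(|L(G)|)\<close> (reduced homology throughout).\<close>

section \<open>Coherent topologies\<close>

text \<open>Only the half of coherence needed to test continuity is required: a subset of
  \<open>Z\<close> whose traces on the pieces are open in the ambient \<open>T\<close> is open.\<close>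

definition coherent_with :: "'x topology \<Rightarrow> 'x topology \<Rightarrow> 'x set set \<Rightarrow> bool" where
  "coherent_with Z T F \<longleftrightarrow> topspace Z = \<Union>F \<and> (\<forall>K\<in>F. K \<subseteq> topspace T) \<and>
     (\<forall>W. W \<subseteq> topspace Z \<and> (\<forall>K\<in>F. openin (subtopology T K) (W \<inter> K)) \<longrightarrow> openin Z W)"

lemma coherent_withI:
  assumes "topspace Z = \<Union>F" "\<And>K. K \<in> F \<Longrightarrow> K \<subseteq> topspace T"
    "\<And>W. W \<subseteq> topspace Z \<Longrightarrow> (\<And>K. K \<in> F \<Longrightarrow> openin (subtopology T K) (W \<inter> K)) \<Longrightarrow> openin Z W"
  shows "coherent_with Z T F"
  using assms unfolding coherent_with_def by (metis (mono_tags))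

lemma coherent_with_topspace: "coherent_with Z T F \<Longrightarrow> topspace Z = \<Union>F"
  unfolding coherent_with_def by simp

lemma coherent_with_subset: "coherent_with Z T F \<Longrightarrow> K \<in> F \<Longrightarrow> K \<subseteq> topspace T"
  unfolding coherent_with_def by simp

lemma openin_coherent_withI:
  assumes "coherent_with Z T F" "W \<subseteq> topspace Z" "\<And>K. K \<in> F \<Longrightarrow> openin (subtopology T K) (W \<inter> K)"
  shows "openin Z W"
  using assms unfolding coherent_with_def by (meson ballI)

lemma continuous_map_coherent_with:
  assumes Z: "coherent_with Z T F" and "f \<in> topspace Z \<rightarrow> topspace Y"
    and cont: "\<And>K. K \<in> F \<Longrightarrow> continuous_map (subtopology T K) Y f"
  shows "continuous_map Z Y f"
  unfolding continuous_map_def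
proof (intro conjI allI impI)
  show "f \<in> topspace Z \<rightarrow> topspace Y" by fact
  fix V assume V: "openin Y V"
  have "openin (subtopology T K) ({x \<in> topspace Z. f x \<in> V} \<inter> K)" if K: "K \<in> F" for K
  proof -
    have "{x \<in> topspace (subtopology T K). f x \<in> V} = {x \<in> topspace Z. f x \<in> V} \<inter> K"
      using coherent_with_subset[OF Z K] coherent_with_topspace[OF Z] K by auto
    then show ?thesis
      using openin_continuous_map_preimage[OF cont[OF K] V] by simp
  qed
  then show "openin Z {x \<in> topspace Z. f x \<in> V}"
    by (intro openin_coherent_withI[OF Z]) auto
qed

lemma coherent_with_subtopology:
  assumes Z: "coherent_with Z T F" and "W \<subseteq> topspace Z"
    and W: "\<And>K. K \<in> F \<Longrightarrow> openin (subtopology T K) (W \<inter> K)"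
  shows "coherent_with (subtopology Z W) T ((\<inter>) W ` F)"
proof (rule coherent_withI)
  show "topspace (subtopology Z W) = \<Union> ((\<inter>) W ` F)"
    using coherent_with_topspace[OF Z] \<open>W \<subseteq> topspace Z\<close> by auto
  show "K \<subseteq> topspace T" if "K \<in> (\<inter>) W ` F" for K
    using coherent_with_subset[OF Z] that by auto
next
  fix V assume V: "V \<subseteq> topspace (subtopology Z W)"
    and traces: "\<And>K. K \<in> (\<inter>) W ` F \<Longrightarrow> openin (subtopology T K) (V \<inter> K)"
  have VW: "V \<subseteq> W" using V by auto
  have "openin (subtopology T K) (V \<inter> K)" if K: "K \<in> F" for K
  proof -
    have "openin (subtopology T (W \<inter> K)) (V \<inter> (W \<inter> K))"
      using traces K by blast
    then have "openin (subtopology (subtopology T K) (W \<inter> K)) (V \<inter> (W \<inter> K))"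
      by (simp add: subtopology_subtopology Int_commute)
    then have "openin (subtopology T K) (V \<inter> (W \<inter> K))"
      using openin_trans_full W[OF K] by blast
    moreover have "V \<inter> (W \<inter> K) = V \<inter> K" using VW by auto
    ultimately show ?thesis by simp
  qed
  then have "openin Z V" using V by (intro openin_coherent_withI[OF Z]) auto
  then show "openin (subtopology Z W) V"
    using VW by (metis inf.absorb_iff2 openin_subtopology_Int2)
qed

lemma openin_coherent_with_tube:
  assumes Z: "coherent_with Z T F" and J: "compactin Y J"
    and traces: "\<And>K. K \<in> F \<Longrightarrow> openin (prod_topology Y (subtopology T K)) (W \<inter> (topspace Y \<times> K))"
  shows "openin Z {x \<in> topspace Z. J \<times> {x} \<subseteq> W}"
proof (rule openin_coherent_withI[OF Z])
  fix K assume K: "K \<in> F"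
  have KT: "K \<subseteq> topspace T" and KZ: "K \<subseteq> topspace Z"
    using coherent_with_subset[OF Z K] coherent_with_topspace[OF Z] K by auto
  let ?M = "{x \<in> topspace Z. J \<times> {x} \<subseteq> W}"
  show "openin (subtopology T K) (?M \<inter> K)"
    unfolding openin_subopen[of _ "?M \<inter> K"]
  proof
    fix y assume y: "y \<in> ?M \<inter> K"
    have "J \<times> {y} \<subseteq> W \<inter> (topspace Y \<times> K)"
      using y compactin_subset_topspace[OF J] by blast
    moreover have "y \<in> topspace (subtopology T K)" using y KT by auto
    ultimately obtain U V where UV: "openin Y U" "openin (subtopology T K) V" "J \<subseteq> U" "y \<in> V"
      "U \<times> V \<subseteq> W \<inter> (topspace Y \<times> K)"
      using tube_lemma_left[OF traces[OF K] J] by metis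
    have "V \<subseteq> ?M \<inter> K"
    proof
      fix z assume z: "z \<in> V"
      then have "z \<in> K" using openin_subset[OF UV(2)] by auto
      moreover have "J \<times> {z} \<subseteq> W" using UV(3,5) z by auto
      ultimately show "z \<in> ?M \<inter> K" using KZ by auto
    qed
    then show "\<exists>V. openin (subtopology T K) V \<and> y \<in> V \<and> V \<subseteq> ?M \<inter> K" using UV by blast
  qed
qed auto

lemma coherent_with_prod_interval:
  assumes Z: "coherent_with Z T F"
  shows "coherent_with (prod_topology (top_of_set {0..1::real}) Z) (prod_topology euclideanreal T)
           ((\<times>) {0..1} ` F)"
proof (rule coherent_withI)
  show "topspace (prod_topology (top_of_set {0..1::real}) Z) = \<Union> ((\<times>) {0..1} ` F)"
    using coherent_with_topspace[OF Z] by auto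
  show "K \<subseteq> topspace (prod_topology euclideanreal T)" if "K \<in> (\<times>) {0..1::real} ` F" for K
    using coherent_with_subset[OF Z] that by auto
next
  fix W assume W: "W \<subseteq> topspace (prod_topology (top_of_set {0..1::real}) Z)"
    and W_traces: "\<And>K. K \<in> (\<times>) {0..1} ` F \<Longrightarrow> openin (subtopology (prod_topology euclideanreal T) K) (W \<inter> K)"
  have traces: "openin (prod_topology (top_of_set {0..1}) (subtopology T K)) (W \<inter> ({0..1} \<times> K))"
    if "K \<in> F" for K
    using W_traces[of "{0..1} \<times> K"] that by (simp add: subtopology_Times)
  show "openin (prod_topology (top_of_set {0..1}) Z) W"
    unfolding openin_subopen[of _ W]
  proof
    fix p assume "p \<in> W"
    then obtain t0 x0 where p: "p = (t0, x0)" "(t0, x0) \<in> W" by (cases p) auto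
    with W have t0: "t0 \<in> {0..1}" and x0: "x0 \<in> topspace Z" by auto
    then obtain K0 where K0: "K0 \<in> F" "x0 \<in> K0" using coherent_with_topspace[OF Z] by auto
    have "(t0, x0) \<in> W \<inter> ({0..1} \<times> K0)" using p(2) K0(2) t0 by auto
    then obtain U V where UV: "openin (top_of_set {0..1}) U" "openin (subtopology T K0) V"
      "t0 \<in> U" "x0 \<in> V" "U \<times> V \<subseteq> W \<inter> ({0..1} \<times> K0)"
      using traces[OF K0(1), unfolded openin_prod_topology_alt] by meson
    then have U: "openin (top_of_set {0..1}) U" "t0 \<in> U" "U \<times> {x0} \<subseteq> W" by auto
    obtain e where e: "e > 0" "\<And>t. t \<in> {0..1} \<Longrightarrow> dist t t0 < e \<Longrightarrow> t \<in> U"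
      using U(1,2) unfolding openin_euclidean_subtopology_iff by (metis dist_commute)
    define J where "J = cball t0 (e/2) \<inter> {0..1::real}"
    define M where "M = {x \<in> topspace Z. J \<times> {x} \<subseteq> W}"
    have "compactin (top_of_set {0..1}) J"
      unfolding J_def by (auto simp: compactin_subtopology compact_Int_closed)
    then have M: "openin Z M"
      unfolding M_def using traces by (intro openin_coherent_with_tube[OF Z]) auto
    have "J \<subseteq> U" using e unfolding J_def by (auto simp: dist_commute)
    then have "x0 \<in> M" using U(3) x0 unfolding M_def by auto
    define J' where "J' = ball t0 (e/2) \<inter> {0..1::real}"
    have "openin (top_of_set {0..1}) J'"
      unfolding J'_def by (metis Int_commute open_ball openin_open_Int)
    then have "openin (prod_topology (top_of_set {0..1}) Z) (J' \<times> M)"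
      using M by (simp add: openin_prod_Times_iff)
    moreover have "J' \<times> M \<subseteq> W" unfolding M_def J'_def J_def by auto
    moreover have "p \<in> J' \<times> M" using p t0 \<open>x0 \<in> M\<close> e unfolding J'_def by auto
    ultimately show "\<exists>V. openin (prod_topology (top_of_set {0..1}) Z) V \<and> p \<in> V \<and> V \<subseteq> W"
      by blast
  qed
qed

section \<open>Geometric realizations\<close>

lemma mem_closed_simplex_iff:
  assumes "finite \<sigma>" "\<sigma> \<subseteq> P" "is_chain ord \<sigma>"
  shows "x \<in> closed_simplex P ord \<sigma> \<longleftrightarrow> (\<forall>c. 0 \<le> x c) \<and> (\<forall>c. x c \<noteq> 0 \<longrightarrow> c \<in> \<sigma>) \<and> sum x \<sigma> = 1"
proof
  assume x: "x \<in> closed_simplex P ord \<sigma>"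
  then have supp: "{v. x v \<noteq> 0} \<subseteq> \<sigma>" "sum x {v. x v \<noteq> 0} = 1" "\<forall>v. 0 \<le> x v"
    unfolding closed_simplex_def realization_carrier_def by auto
  have "sum x {v. x v \<noteq> 0} = sum x \<sigma>"
    by (rule sum.mono_neutral_left) (use assms supp in auto)
  then show "(\<forall>c. 0 \<le> x c) \<and> (\<forall>c. x c \<noteq> 0 \<longrightarrow> c \<in> \<sigma>) \<and> sum x \<sigma> = 1" using supp by auto
next
  assume x: "(\<forall>c. 0 \<le> x c) \<and> (\<forall>c. x c \<noteq> 0 \<longrightarrow> c \<in> \<sigma>) \<and> sum x \<sigma> = 1"
  then have supp: "{v. x v \<noteq> 0} \<subseteq> \<sigma>" by auto
  have "sum x {v. x v \<noteq> 0} = sum x \<sigma>"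
    by (rule sum.mono_neutral_left) (use assms supp in auto)
  moreover have "finite {v. x v \<noteq> 0}" using supp assms finite_subset by blast
  moreover have "is_chain ord {v. x v \<noteq> 0}" using assms(3) supp unfolding is_chain_def by blast
  ultimately show "x \<in> closed_simplex P ord \<sigma>"
    using x supp assms unfolding closed_simplex_def realization_carrier_def by auto
qed

lemma closed_simplex_mono: "\<tau> \<subseteq> \<sigma> \<Longrightarrow> closed_simplex P ord \<tau> \<subseteq> closed_simplex P ord \<sigma>"
  unfolding closed_simplex_def by auto

lemma realization_carrier_mono: "P' \<subseteq> P \<Longrightarrow> realization_carrier P' ord \<subseteq> realization_carrier P ord"
  unfolding realization_carrier_def by auto

lemma realization_carrier_support:
  assumes "x \<in> realization_carrier P ord"
  shows "finite {c. x c \<noteq> 0}" "{c. x c \<noteq> 0} \<subseteq> P" "is_chain ord {c. x c \<noteq> 0}"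
    "x \<in> closed_simplex P ord {c. x c \<noteq> 0}"
  using assms unfolding realization_carrier_def closed_simplex_def by auto

lemma indicator_in_closed_simplex:
  assumes "finite \<sigma>" "\<sigma> \<subseteq> P" "is_chain ord \<sigma>" "v \<in> \<sigma>"
  shows "indicator {v} \<in> closed_simplex P ord \<sigma>"
  using assms by (simp add: mem_closed_simplex_iff indicator_def)

lemma closed_simplex_convex:
  assumes \<sigma>: "finite \<sigma>" "\<sigma> \<subseteq> P" "is_chain ord \<sigma>"
    and "x \<in> closed_simplex P ord \<sigma>" "y \<in> closed_simplex P ord \<sigma>" "0 \<le> t" "t \<le> 1"
  shows "(\<lambda>c. (1 - t) * y c + t * x c) \<in> closed_simplex P ord \<sigma>"
proof -
  have x: "(\<forall>c. 0 \<le> x c) \<and> (\<forall>c. x c \<noteq> 0 \<longrightarrow> c \<in> \<sigma>) \<and> sum x \<sigma> = 1"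
    and y: "(\<forall>c. 0 \<le> y c) \<and> (\<forall>c. y c \<noteq> 0 \<longrightarrow> c \<in> \<sigma>) \<and> sum y \<sigma> = 1"
    using assms mem_closed_simplex_iff by blast+
  have "(\<Sum>c\<in>\<sigma>. (1 - t) * y c + t * x c) = (1 - t) * sum y \<sigma> + t * sum x \<sigma>"
    by (simp add: sum.distrib sum_distrib_left)
  also have "\<dots> = 1" using x y by simp
  finally have "(\<Sum>c\<in>\<sigma>. (1 - t) * y c + t * x c) = 1" .
  moreover have "\<forall>c. 0 \<le> (1 - t) * y c + t * x c" using x y assms(6,7) by simp
  moreover have "\<forall>c. (1 - t) * y c + t * x c \<noteq> 0 \<longrightarrow> c \<in> \<sigma>"
    using x y by (metis add.right_neutral mult_zero_right)
  ultimately show ?thesis unfolding mem_closed_simplex_iff[OF \<sigma>] by blast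
qed

definition closed_simplices :: "'v set \<Rightarrow> ('v \<Rightarrow> 'v \<Rightarrow> bool) \<Rightarrow> ('v \<Rightarrow> real) set set" where
  "closed_simplices P ord = {closed_simplex P ord \<sigma> | \<sigma>. finite \<sigma> \<and> \<sigma> \<subseteq> P \<and> is_chain ord \<sigma>}"

lemma openin_realization:
  "openin (realization P ord) U \<longleftrightarrow> U \<subseteq> realization_carrier P ord \<and>
     (\<forall>\<sigma>. finite \<sigma> \<and> \<sigma> \<subseteq> P \<and> is_chain ord \<sigma> \<longrightarrow>
        openin (subtopology (powertop_real UNIV) (closed_simplex P ord \<sigma>))
               (U \<inter> closed_simplex P ord \<sigma>))"
  unfolding realization_def topology_inverse'[OF istopology_realization] by simp

lemma coherent_with_realization:
  "coherent_with (realization P ord) (powertop_real UNIV) (closed_simplices P ord)"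
proof (rule coherent_withI)
  show "topspace (realization P ord) = \<Union> (closed_simplices P ord)"
  proof
    show "topspace (realization P ord) \<subseteq> \<Union> (closed_simplices P ord)"
    proof
      fix x assume "x \<in> topspace (realization P ord)"
      then have "x \<in> realization_carrier P ord" by (simp add: topspace_realization)
      note supp = realization_carrier_support[OF this]
      have "closed_simplex P ord {c. x c \<noteq> 0} \<in> closed_simplices P ord"
        using supp(1-3) unfolding closed_simplices_def by blast
      with supp(4) show "x \<in> \<Union> (closed_simplices P ord)" by blast
    qed
    show "\<Union> (closed_simplices P ord) \<subseteq> topspace (realization P ord)"
      unfolding closed_simplices_def closed_simplex_def topspace_realization by auto
  qed
next
  fix W assume W: "W \<subseteq> topspace (realization P ord)"
    and traces: "\<And>K. K \<in> closed_simplices P ord \<Longrightarrow> openin (subtopology (powertop_real UNIV) K) (W \<inter> K)"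
  show "openin (realization P ord) W" unfolding openin_realization
  proof (intro conjI allI impI)
    show "W \<subseteq> realization_carrier P ord" using W by (simp add: topspace_realization)
    fix \<sigma> assume "finite \<sigma> \<and> \<sigma> \<subseteq> P \<and> is_chain ord \<sigma>"
    then show "openin (subtopology (powertop_real UNIV) (closed_simplex P ord \<sigma>)) (W \<inter> closed_simplex P ord \<sigma>)"
      by (intro traces) (auto simp: closed_simplices_def)
  qed
qed simp

lemma continuous_map_closed_simplex_realization:
  assumes "finite \<sigma>" "\<sigma> \<subseteq> P" "is_chain ord \<sigma>"
  shows "continuous_map (subtopology (powertop_real UNIV) (closed_simplex P ord \<sigma>)) (realization P ord) id"
  unfolding continuous_map_def
proof (intro conjI allI impI)
  show "id \<in> topspace (subtopology (powertop_real UNIV) (closed_simplex P ord \<sigma>)) \<rightarrow> topspace (realization P ord)"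
    by (auto simp: topspace_realization closed_simplex_def)
  fix U assume "openin (realization P ord) U"
  then have "openin (subtopology (powertop_real UNIV) (closed_simplex P ord \<sigma>)) (U \<inter> closed_simplex P ord \<sigma>)"
    using assms unfolding openin_realization by blast
  moreover have "{x \<in> topspace (subtopology (powertop_real UNIV) (closed_simplex P ord \<sigma>)). id x \<in> U}
     = U \<inter> closed_simplex P ord \<sigma>" by auto
  ultimately show "openin (subtopology (powertop_real UNIV) (closed_simplex P ord \<sigma>))
      {x \<in> topspace (subtopology (powertop_real UNIV) (closed_simplex P ord \<sigma>)). id x \<in> U}" by simp
qed

lemma continuous_map_into_realization:
  assumes Z: "coherent_with Z T F"
    and into: "\<And>K. K \<in> F \<Longrightarrow> \<exists>\<sigma>. finite \<sigma> \<and> \<sigma> \<subseteq> P \<and> is_chain ord \<sigma> \<and> f ` K \<subseteq> closed_simplex P ord \<sigma>"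
    and cont: "\<And>K. K \<in> F \<Longrightarrow> continuous_map (subtopology T K) (powertop_real UNIV) f"
  shows "continuous_map Z (realization P ord) f"
proof (rule continuous_map_coherent_with[OF Z])
  show "f \<in> topspace Z \<rightarrow> topspace (realization P ord)"
  proof
    fix x assume "x \<in> topspace Z"
    then obtain K where K: "K \<in> F" "x \<in> K" using coherent_with_topspace[OF Z] by auto
    then obtain \<sigma> where "f ` K \<subseteq> closed_simplex P ord \<sigma>" using into by metis
    then show "f x \<in> topspace (realization P ord)"
      using K by (auto simp: topspace_realization closed_simplex_def)
  qed
next
  fix K assume K: "K \<in> F"
  then obtain \<sigma> where \<sigma>: "finite \<sigma>" "\<sigma> \<subseteq> P" "is_chain ord \<sigma>" "f ` K \<subseteq> closed_simplex P ord \<sigma>"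
    using into by metis
  then have "continuous_map (subtopology T K) (subtopology (powertop_real UNIV) (closed_simplex P ord \<sigma>)) f"
    using cont[OF K] by (auto simp: continuous_map_in_subtopology)
  from continuous_map_compose[OF this continuous_map_closed_simplex_realization[OF \<sigma>(1-3)]]
  show "continuous_map (subtopology T K) (realization P ord) f" by simp
qed

lemma continuous_map_coordinate: "continuous_map (powertop_real UNIV) euclideanreal (\<lambda>x. x c)"
  using continuous_map_product_projection[of c UNIV "\<lambda>_. euclideanreal"] by simp

lemma openin_realization_coordinate:
  assumes "open A"
  shows "openin (realization P ord) {x \<in> realization_carrier P ord. x v \<in> A}"
  unfolding openin_realization
proof (intro conjI allI impI)
  fix \<sigma>
  let ?K = "subtopology (powertop_real UNIV) (closed_simplex P ord \<sigma>)"
  have "openin ?K {x \<in> topspace ?K. x v \<in> A}"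
    by (rule openin_continuous_map_preimage[OF continuous_map_from_subtopology[OF continuous_map_coordinate]]) (simp add: assms)
  moreover have "{x \<in> topspace ?K. x v \<in> A} = {x \<in> realization_carrier P ord. x v \<in> A} \<inter> closed_simplex P ord \<sigma>"
    by (auto simp: closed_simplex_def)
  ultimately show "openin ?K ({x \<in> realization_carrier P ord. x v \<in> A} \<inter> closed_simplex P ord \<sigma>)"
    by simp
qed auto

lemma coherent_with_realization_subtopology:
  assumes "openin (realization P ord) W"
  shows "coherent_with (subtopology (realization P ord) W) (powertop_real UNIV) ((\<inter>) W ` closed_simplices P ord)"
proof (rule coherent_with_subtopology[OF coherent_with_realization])
  show "W \<subseteq> topspace (realization P ord)" using openin_subset[OF assms] .
  fix K assume "K \<in> closed_simplices P ord"
  then show "openin (subtopology (powertop_real UNIV) K) (W \<inter> K)"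
    using assms unfolding openin_realization closed_simplices_def by blast
qed

lemma continuous_map_straight_line:
  assumes "continuous_map (subtopology (powertop_real UNIV) K) (powertop_real UNIV) a"
  shows "continuous_map (subtopology (prod_topology euclideanreal (powertop_real UNIV)) ({0..1} \<times> K))
           (powertop_real UNIV) (\<lambda>p c. (1 - fst p) * a (snd p) c + fst p * snd p c)"
  unfolding continuous_map_componentwise_UNIV
proof
  fix c
  let ?IK = "subtopology (prod_topology euclideanreal (powertop_real UNIV)) ({0..1} \<times> K)"
  have snd: "continuous_map ?IK (subtopology (powertop_real UNIV) K) snd"
    by (auto simp: continuous_map_in_subtopology intro!: continuous_map_from_subtopology continuous_map_snd)
  have "continuous_map ?IK euclideanreal (\<lambda>p. a (snd p) c)"
    using continuous_map_compose[OF snd continuous_map_compose[OF assms continuous_map_coordinate[of c]]]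
    by (simp add: o_def)
  moreover have "continuous_map ?IK euclideanreal (\<lambda>p. snd p c)"
    using continuous_map_compose[OF snd continuous_map_from_subtopology[OF continuous_map_coordinate[of c]]]
    by (simp add: o_def)
  moreover have "continuous_map ?IK euclideanreal fst"
    by (intro continuous_map_from_subtopology continuous_map_fst)
  ultimately show "continuous_map ?IK euclideanreal (\<lambda>p. (1 - fst p) * a (snd p) c + fst p * snd p c)"
    by (intro continuous_intros)
qed

lemma homotopic_with_straight_line:
  assumes W: "openin (realization P ord) W"
    and a_in: "\<And>\<sigma> x. finite \<sigma> \<Longrightarrow> \<sigma> \<subseteq> P \<Longrightarrow> is_chain ord \<sigma> \<Longrightarrow>
        x \<in> W \<inter> closed_simplex P ord \<sigma> \<Longrightarrow> a x \<in> closed_simplex P ord \<sigma>"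
    and a_cont: "\<And>\<sigma>. finite \<sigma> \<Longrightarrow> \<sigma> \<subseteq> P \<Longrightarrow> is_chain ord \<sigma> \<Longrightarrow>
        continuous_map (subtopology (powertop_real UNIV) (W \<inter> closed_simplex P ord \<sigma>)) (powertop_real UNIV) a"
    and stay: "\<And>x t. x \<in> W \<Longrightarrow> 0 \<le> t \<Longrightarrow> t \<le> 1 \<Longrightarrow> (\<lambda>c. (1 - t) * a x c + t * x c) \<in> W"
  shows "homotopic_with (\<lambda>_. True) (subtopology (realization P ord) W) (subtopology (realization P ord) W) a id"
  unfolding homotopic_with_def
proof (intro exI conjI allI ballI)
  define h where "h = (\<lambda>p::real \<times> _. \<lambda>c. (1 - fst p) * a (snd p) c + fst p * snd p c)"
  show "h (0, x) = a x" "h (1, x) = id x" for x unfolding h_def by auto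
  let ?IW = "prod_topology (top_of_set {0..1}) (subtopology (realization P ord) W)"
  have "continuous_map ?IW (realization P ord) h"
  proof (rule continuous_map_into_realization[OF coherent_with_prod_interval[OF coherent_with_realization_subtopology[OF W]]])
    fix K :: "(real \<times> _) set" assume "K \<in> (\<times>) {0..1} ` (\<inter>) W ` closed_simplices P ord"
    then obtain \<sigma> where K: "K = {0..1} \<times> (W \<inter> closed_simplex P ord \<sigma>)"
      and \<sigma>: "finite \<sigma>" "\<sigma> \<subseteq> P" "is_chain ord \<sigma>"
      unfolding closed_simplices_def by blast
    have "h ` K \<subseteq> closed_simplex P ord \<sigma>"
      unfolding K h_def using closed_simplex_convex[OF \<sigma>] a_in[OF \<sigma>] by auto
    then show "\<exists>\<sigma>. finite \<sigma> \<and> \<sigma> \<subseteq> P \<and> is_chain ord \<sigma> \<and> h ` K \<subseteq> closed_simplex P ord \<sigma>"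
      using \<sigma> by blast
    show "continuous_map (subtopology (prod_topology euclideanreal (powertop_real UNIV)) K) (powertop_real UNIV) h"
      unfolding K h_def by (rule continuous_map_straight_line[OF a_cont[OF \<sigma>]])
  qed
  moreover have "h \<in> topspace ?IW \<rightarrow> W"
    using stay unfolding h_def by auto
  ultimately show "continuous_map ?IW (subtopology (realization P ord) W) h"
    by (simp add: continuous_map_in_subtopology)
qed simp

section \<open>Neighbourhoods of a vertex\<close>

text \<open>Projection from the vertex \<open>v\<close> onto the opposite face; meaningful only where \<open>x v < 1\<close>.\<close>

definition radial_projection :: "'v \<Rightarrow> ('v \<Rightarrow> real) \<Rightarrow> ('v \<Rightarrow> real)" where
  "radial_projection v x = (\<lambda>c. if c = v then 0 else x c / (1 - x v))"

lemma radial_projection_in_closed_simplex: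
  assumes \<sigma>: "finite \<sigma>" "\<sigma> \<subseteq> P" "is_chain ord \<sigma>"
    and x: "x \<in> closed_simplex P ord \<sigma>" "x v < 1"
  shows "radial_projection v x \<in> closed_simplex (P - {v}) ord (\<sigma> - {v})"
    "radial_projection v x \<in> closed_simplex P ord \<sigma>"
proof -
  have xc: "(\<forall>c. 0 \<le> x c) \<and> (\<forall>c. x c \<noteq> 0 \<longrightarrow> c \<in> \<sigma>) \<and> sum x \<sigma> = 1"
    using mem_closed_simplex_iff[OF \<sigma>] x by blast
  have pos: "1 - x v > 0" using x by simp
  have nonneg: "\<forall>c. 0 \<le> radial_projection v x c" using xc pos unfolding radial_projection_def by auto
  have supp: "\<forall>c. radial_projection v x c \<noteq> 0 \<longrightarrow> c \<in> \<sigma> - {v}"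
    using xc unfolding radial_projection_def by auto
  have "sum x (\<sigma> - {v}) = 1 - x v"
  proof (cases "v \<in> \<sigma>")
    case True then show ?thesis using xc \<sigma>(1) by (simp add: sum_diff1)
  next
    case False then show ?thesis using xc by auto
  qed
  then have sum_face: "sum (radial_projection v x) (\<sigma> - {v}) = 1"
    using pos by (simp add: radial_projection_def sum_divide_distrib[symmetric])
  moreover have "sum (radial_projection v x) \<sigma> = sum (radial_projection v x) (\<sigma> - {v})"
    by (rule sum.mono_neutral_right) (use \<sigma>(1) in \<open>auto simp: radial_projection_def\<close>)
  ultimately have "sum (radial_projection v x) \<sigma> = 1" by simp
  then show "radial_projection v x \<in> closed_simplex P ord \<sigma>"
    using mem_closed_simplex_iff[OF \<sigma>] nonneg supp by blast
  have "finite (\<sigma> - {v})" "\<sigma> - {v} \<subseteq> P - {v}" "is_chain ord (\<sigma> - {v})"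
    using \<sigma> unfolding is_chain_def by auto
  then show "radial_projection v x \<in> closed_simplex (P - {v}) ord (\<sigma> - {v})"
    using mem_closed_simplex_iff nonneg supp sum_face by blast
qed

lemma continuous_map_radial_projection:
  assumes "\<And>x. x \<in> K \<Longrightarrow> x v < 1"
  shows "continuous_map (subtopology (powertop_real UNIV) K) (powertop_real UNIV) (radial_projection v)"
  unfolding continuous_map_componentwise_UNIV
proof
  fix c
  have "continuous_map (subtopology (powertop_real UNIV) K) euclideanreal (\<lambda>x. x c / (1 - x v))"
    by (intro continuous_intros continuous_map_from_subtopology continuous_map_coordinate)
      (use assms in force)
  then show "continuous_map (subtopology (powertop_real UNIV) K) euclideanreal (\<lambda>x. radial_projection v x c)"
    unfolding radial_projection_def by (cases "c = v") simp_all
qed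

lemma continuous_map_realization_mono:
  assumes "P' \<subseteq> P"
  shows "continuous_map (realization P' ord) (realization P ord) id"
proof (rule continuous_map_into_realization[OF coherent_with_realization])
  fix K assume "K \<in> closed_simplices P' ord"
  then obtain \<sigma> where K: "K = closed_simplex P' ord \<sigma>" and \<sigma>: "finite \<sigma>" "\<sigma> \<subseteq> P'" "is_chain ord \<sigma>"
    unfolding closed_simplices_def by blast
  then have "id ` K \<subseteq> closed_simplex P ord \<sigma>"
    using mem_closed_simplex_iff[OF \<sigma>] mem_closed_simplex_iff[of \<sigma> P ord] assms by auto
  then show "\<exists>\<tau>. finite \<tau> \<and> \<tau> \<subseteq> P \<and> is_chain ord \<tau> \<and> id ` K \<subseteq> closed_simplex P ord \<tau>"
    using \<sigma> assms by blast
qed (simp add: continuous_map_from_subtopology)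

lemma continuous_map_radial_projection_realization:
  fixes P :: "'v set" and ord :: "'v \<Rightarrow> 'v \<Rightarrow> bool" and v :: 'v
  defines "S \<equiv> {x \<in> realization_carrier P ord. x v < 1}"
  shows "continuous_map (subtopology (realization P ord) S) (realization (P - {v}) ord) (radial_projection v)"
proof (rule continuous_map_into_realization[OF coherent_with_realization_subtopology])
  show "openin (realization P ord) S"
    using openin_realization_coordinate[of "{..<1}" P ord v] unfolding S_def by simp
  fix K assume "K \<in> (\<inter>) S ` closed_simplices P ord"
  then obtain \<sigma> where K: "K = S \<inter> closed_simplex P ord \<sigma>" and \<sigma>: "finite \<sigma>" "\<sigma> \<subseteq> P" "is_chain ord \<sigma>"
    unfolding closed_simplices_def by blast
  have "radial_projection v ` K \<subseteq> closed_simplex (P - {v}) ord (\<sigma> - {v})"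
    using radial_projection_in_closed_simplex(1)[OF \<sigma>] unfolding K S_def by auto
  moreover have "finite (\<sigma> - {v})" "\<sigma> - {v} \<subseteq> P - {v}" "is_chain ord (\<sigma> - {v})"
    using \<sigma> unfolding is_chain_def by auto
  ultimately show "\<exists>\<tau>. finite \<tau> \<and> \<tau> \<subseteq> P - {v} \<and> is_chain ord \<tau> \<and>
      radial_projection v ` K \<subseteq> closed_simplex (P - {v}) ord \<tau>"
    by blast
  show "continuous_map (subtopology (powertop_real UNIV) K) (powertop_real UNIV) (radial_projection v)"
    by (rule continuous_map_radial_projection) (auto simp: K S_def)
qed

lemma homotopic_radial_projection_id:
  fixes P :: "'v set" and ord :: "'v \<Rightarrow> 'v \<Rightarrow> bool" and v :: 'v
  defines "S \<equiv> {x \<in> realization_carrier P ord. x v < 1}"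
  shows "homotopic_with (\<lambda>_. True) (subtopology (realization P ord) S) (subtopology (realization P ord) S)
           (radial_projection v) id"
proof (rule homotopic_with_straight_line)
  show "openin (realization P ord) S"
    using openin_realization_coordinate[of "{..<1}" P ord v] unfolding S_def by simp
next
  fix \<sigma> x assume \<sigma>: "finite \<sigma>" "\<sigma> \<subseteq> P" "is_chain ord \<sigma>" and "x \<in> S \<inter> closed_simplex P ord \<sigma>"
  then show "radial_projection v x \<in> closed_simplex P ord \<sigma>"
    using radial_projection_in_closed_simplex(2)[OF \<sigma>] unfolding S_def by auto
next
  fix \<sigma>
  show "continuous_map (subtopology (powertop_real UNIV) (S \<inter> closed_simplex P ord \<sigma>)) (powertop_real UNIV)
      (radial_projection v)"
    by (rule continuous_map_radial_projection) (auto simp: S_def)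
next
  fix x and t :: real assume x: "x \<in> S" and t: "0 \<le> t" "t \<le> 1"
  then have xC: "x \<in> realization_carrier P ord" and xv: "x v < 1" unfolding S_def by auto
  note supp = realization_carrier_support[OF xC]
  have "(\<lambda>c. (1 - t) * radial_projection v x c + t * x c) \<in> closed_simplex P ord {c. x c \<noteq> 0}"
    by (rule closed_simplex_convex[OF supp(1-3) supp(4) radial_projection_in_closed_simplex(2)[OF supp xv] t])
  moreover have "t * x v \<le> x v"
    using xC t unfolding realization_carrier_def by (simp add: mult_left_le_one_le)
  ultimately show "(\<lambda>c. (1 - t) * radial_projection v x c + t * x c) \<in> S"
    using xv unfolding S_def closed_simplex_def by (simp add: radial_projection_def)
qed

lemma homotopy_equivalent_vertex_deletion:
  "subtopology (realization P ord) {x \<in> realization_carrier P ord. x v < 1}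
     homotopy_equivalent_space realization (P - {v}) ord"
proof -
  let ?S = "{x \<in> realization_carrier P ord. x v < 1}"
  have vertex_zero: "x v = 0" if "x \<in> topspace (realization (P - {v}) ord)" for x
    using that by (auto simp: topspace_realization realization_carrier_def)
  have "topspace (realization (P - {v}) ord) \<subseteq> ?S"
  proof
    fix x assume x: "x \<in> topspace (realization (P - {v}) ord)"
    then have "x v = 0" by (rule vertex_zero)
    then show "x \<in> ?S" using realization_carrier_mono[of "P - {v}" P ord] x
      by (auto simp: topspace_realization)
  qed
  then have incl: "continuous_map (realization (P - {v}) ord) (subtopology (realization P ord) ?S) id"
    using continuous_map_realization_mono[of "P - {v}" P ord]
    by (auto simp: continuous_map_in_subtopology)
  note proj = continuous_map_radial_projection_realization[of P ord v]
  have "homotopic_with (\<lambda>_. True) (realization (P - {v}) ord) (realization (P - {v}) ord)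
      (radial_projection v \<circ> id) id"
    by (rule homotopic_with_equal[OF _ _ continuous_map_compose[OF incl proj]])
      (auto simp: radial_projection_def vertex_zero)
  moreover have "homotopic_with (\<lambda>_. True) (subtopology (realization P ord) ?S) (subtopology (realization P ord) ?S)
      (id \<circ> radial_projection v) id"
    using homotopic_radial_projection_id[of P ord v] by simp
  ultimately show ?thesis
    unfolding homotopy_equivalent_space_def using proj incl by blast
qed

lemma contractible_open_star:
  "contractible_space (subtopology (realization P ord) {x \<in> realization_carrier P ord. 0 < x v})"
proof -
  let ?U = "{x \<in> realization_carrier P ord. 0 < x v}"
  have "homotopic_with (\<lambda>_. True) (subtopology (realization P ord) ?U) (subtopology (realization P ord) ?U)
      (\<lambda>x. indicator {v}) id"
  proof (rule homotopic_with_straight_line)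
    show "openin (realization P ord) ?U"
      using openin_realization_coordinate[of "{0<..}" P ord v] by simp
  next
    fix \<sigma> x assume \<sigma>: "finite \<sigma>" "\<sigma> \<subseteq> P" "is_chain ord \<sigma>" and x: "x \<in> ?U \<inter> closed_simplex P ord \<sigma>"
    then have "v \<in> \<sigma>" using mem_closed_simplex_iff[OF \<sigma>] by force
    then show "indicator {v} \<in> closed_simplex P ord \<sigma>" by (rule indicator_in_closed_simplex[OF \<sigma>])
  next
    fix x and t :: real assume x: "x \<in> ?U" and t: "0 \<le> t" "t \<le> 1"
    then have xC: "x \<in> realization_carrier P ord" and xv: "0 < x v" by auto
    note supp = realization_carrier_support[OF xC]
    have "(\<lambda>c. (1 - t) * indicator {v} c + t * x c) \<in> closed_simplex P ord {c. x c \<noteq> 0}"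
      using closed_simplex_convex[OF supp(1-3) supp(4) indicator_in_closed_simplex[OF supp(1-3)] t] xv
      by simp
    moreover have "0 < (1 - t) + t * x v"
      using t xv by (cases "t = 1") (auto intro: add_pos_nonneg)
    ultimately show "(\<lambda>c. (1 - t) * indicator {v} c + t * x c) \<in> ?U"
      unfolding closed_simplex_def by simp
  qed simp
  then show ?thesis
    unfolding contractible_space_def by (subst homotopic_with_sym) (auto simp: id_def)
qed

locale poset_vertex_link =
  fixes P :: "'v set" and ord :: "'v \<Rightarrow> 'v \<Rightarrow> bool" and v :: 'v
    and Q :: "'w set" and ordQ :: "'w \<Rightarrow> 'w \<Rightarrow> bool" and e :: "'w \<Rightarrow> 'v"
  assumes vertex: "v \<in> P" "ord v v"
    and inj: "inj_on e Q"
    and link: "e ` Q = {c \<in> P. c \<noteq> v \<and> (ord c v \<or> ord v c)}"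
    and order_embedding: "\<And>a b. a \<in> Q \<Longrightarrow> b \<in> Q \<Longrightarrow> ordQ a b \<longleftrightarrow> ord (e a) (e b)"
begin

definition to_link :: "('v \<Rightarrow> real) \<Rightarrow> ('w \<Rightarrow> real)" where
  "to_link x = (\<lambda>q. if q \<in> Q then x (e q) / (1 - x v) else 0)"

text \<open>A point of the link goes to the midpoint between it and the vertex.\<close>

definition from_link :: "('w \<Rightarrow> real) \<Rightarrow> ('v \<Rightarrow> real)" where
  "from_link y = (\<lambda>c. if c = v then 1/2 else if c \<in> e ` Q then y (inv_into Q e c) / 2 else 0)"

lemma from_link_vertex: "from_link y v = 1/2"
  unfolding from_link_def by simp

lemma from_link_image: "q \<in> Q \<Longrightarrow> from_link y (e q) = y q / 2"
  unfolding from_link_def using link inj by auto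

lemma link_face:
  assumes \<sigma>: "\<sigma> \<subseteq> P" "is_chain ord \<sigma>" and "v \<in> \<sigma>"
  shows "e ` {q \<in> Q. e q \<in> \<sigma>} = \<sigma> - {v}"
proof
  show "e ` {q \<in> Q. e q \<in> \<sigma>} \<subseteq> \<sigma> - {v}" using link by auto
  show "\<sigma> - {v} \<subseteq> e ` {q \<in> Q. e q \<in> \<sigma>}"
  proof
    fix c assume c: "c \<in> \<sigma> - {v}"
    then have "c \<in> e ` Q"
      using \<sigma> \<open>v \<in> \<sigma>\<close> unfolding link is_chain_def by blast
    then show "c \<in> e ` {q \<in> Q. e q \<in> \<sigma>}" using c by blast
  qed
qed

lemma link_chain:
  assumes \<sigma>: "finite \<sigma>" "is_chain ord \<sigma>"
  shows "finite {q \<in> Q. e q \<in> \<sigma>}" "{q \<in> Q. e q \<in> \<sigma>} \<subseteq> Q" "is_chain ordQ {q \<in> Q. e q \<in> \<sigma>}"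
proof -
  have "inj_on e {q \<in> Q. e q \<in> \<sigma>}" by (rule inj_on_subset[OF inj]) blast
  moreover have "e ` {q \<in> Q. e q \<in> \<sigma>} \<subseteq> \<sigma>" by blast
  ultimately show "finite {q \<in> Q. e q \<in> \<sigma>}" using \<sigma>(1) finite_imageD finite_subset by metis
  show "{q \<in> Q. e q \<in> \<sigma>} \<subseteq> Q" by blast
  show "is_chain ordQ {q \<in> Q. e q \<in> \<sigma>}"
    using \<sigma>(2) order_embedding unfolding is_chain_def by auto
qed

lemma cone_chain:
  assumes \<sigma>: "finite \<sigma>" "\<sigma> \<subseteq> Q" "is_chain ordQ \<sigma>"
  shows "finite (insert v (e ` \<sigma>))" "insert v (e ` \<sigma>) \<subseteq> P" "is_chain ord (insert v (e ` \<sigma>))"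
proof -
  show "finite (insert v (e ` \<sigma>))" using \<sigma>(1) by simp
  show "insert v (e ` \<sigma>) \<subseteq> P" using vertex(1) \<sigma>(2) link by auto
  have "ord (e a) v \<or> ord v (e a)" if "a \<in> \<sigma>" for a
    using that \<sigma>(2) link by blast
  moreover have "ord (e a) (e b) \<or> ord (e b) (e a)" if "a \<in> \<sigma>" "b \<in> \<sigma>" for a b
    using that \<sigma> order_embedding unfolding is_chain_def by blast
  ultimately show "is_chain ord (insert v (e ` \<sigma>))"
    using vertex(2) unfolding is_chain_def by blast
qed

lemma to_link_in_closed_simplex:
  assumes \<sigma>: "finite \<sigma>" "\<sigma> \<subseteq> P" "is_chain ord \<sigma>"
    and x: "x \<in> closed_simplex P ord \<sigma>" "0 < x v" "x v < 1"
  shows "to_link x \<in> closed_simplex Q ordQ {q \<in> Q. e q \<in> \<sigma>}"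
proof -
  let ?\<tau> = "{q \<in> Q. e q \<in> \<sigma>}"
  have xc: "(\<forall>c. 0 \<le> x c) \<and> (\<forall>c. x c \<noteq> 0 \<longrightarrow> c \<in> \<sigma>) \<and> sum x \<sigma> = 1"
    using mem_closed_simplex_iff[OF \<sigma>] x by blast
  have pos: "1 - x v > 0" using x by simp
  have "v \<in> \<sigma>" using xc x by force
  have "sum (\<lambda>q. x (e q)) ?\<tau> = sum x (e ` ?\<tau>)"
    by (rule sum.reindex[symmetric, unfolded o_def]) (rule inj_on_subset[OF inj], blast)
  also have "\<dots> = sum x (\<sigma> - {v})" using link_face[OF \<sigma>(2,3) \<open>v \<in> \<sigma>\<close>] by simp
  also have "\<dots> = 1 - x v" using xc \<sigma>(1) \<open>v \<in> \<sigma>\<close> by (simp add: sum_diff1)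
  finally have "sum (to_link x) ?\<tau> = 1"
    using pos by (simp add: to_link_def sum_divide_distrib[symmetric])
  moreover have "\<forall>q. 0 \<le> to_link x q" using xc pos unfolding to_link_def by auto
  moreover have "\<forall>q. to_link x q \<noteq> 0 \<longrightarrow> q \<in> ?\<tau>" using xc unfolding to_link_def by auto
  ultimately show ?thesis using mem_closed_simplex_iff[OF link_chain[OF \<sigma>(1,3)]] by blast
qed

lemma from_link_in_closed_simplex:
  assumes \<sigma>: "finite \<sigma>" "\<sigma> \<subseteq> Q" "is_chain ordQ \<sigma>"
    and y: "y \<in> closed_simplex Q ordQ \<sigma>"
  shows "from_link y \<in> closed_simplex P ord (insert v (e ` \<sigma>))"
proof -
  have yc: "(\<forall>q. 0 \<le> y q) \<and> (\<forall>q. y q \<noteq> 0 \<longrightarrow> q \<in> \<sigma>) \<and> sum y \<sigma> = 1"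
    using mem_closed_simplex_iff[OF \<sigma>] y by blast
  have "v \<notin> e ` \<sigma>" using \<sigma>(2) link by auto
  then have "sum (from_link y) (insert v (e ` \<sigma>)) = 1/2 + sum (from_link y) (e ` \<sigma>)"
    using \<sigma>(1) by (simp add: from_link_vertex)
  also have "sum (from_link y) (e ` \<sigma>) = sum (\<lambda>q. y q / 2) \<sigma>"
    using sum.reindex[OF inj_on_subset[OF inj \<sigma>(2)], of "from_link y"] \<sigma>(2)
    by (simp add: from_link_image subset_iff)
  also have "\<dots> = 1/2" using yc by (simp add: sum_divide_distrib[symmetric])
  finally have "sum (from_link y) (insert v (e ` \<sigma>)) = 1" by simp
  moreover have "\<forall>c. 0 \<le> from_link y c" using yc unfolding from_link_def by auto
  moreover have "\<forall>c. from_link y c \<noteq> 0 \<longrightarrow> c \<in> insert v (e ` \<sigma>)"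
  proof (intro allI impI)
    fix c assume c: "from_link y c \<noteq> 0"
    show "c \<in> insert v (e ` \<sigma>)"
    proof (cases "c = v")
      case False
      then obtain q where "q \<in> Q" "c = e q" "y q \<noteq> 0"
        using c inj unfolding from_link_def by (auto split: if_splits)
      then show ?thesis using yc by auto
    qed simp
  qed
  ultimately show ?thesis using mem_closed_simplex_iff[OF cone_chain[OF \<sigma>]] by blast
qed

lemma continuous_map_to_link:
  assumes "\<And>x. x \<in> K \<Longrightarrow> x v < 1"
  shows "continuous_map (subtopology (powertop_real UNIV) K) (powertop_real UNIV) to_link"
  unfolding continuous_map_componentwise_UNIV
proof
  fix q
  have "continuous_map (subtopology (powertop_real UNIV) K) euclideanreal (\<lambda>x. x (e q) / (1 - x v))"
    by (intro continuous_intros continuous_map_from_subtopology continuous_map_coordinate)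
      (use assms in force)
  then show "continuous_map (subtopology (powertop_real UNIV) K) euclideanreal (\<lambda>x. to_link x q)"
    unfolding to_link_def by (cases "q \<in> Q") simp_all
qed

lemma continuous_map_from_link: "continuous_map (powertop_real UNIV) (powertop_real UNIV) from_link"
  unfolding continuous_map_componentwise_UNIV
proof
  fix c
  have "continuous_map (powertop_real UNIV) euclideanreal (\<lambda>y. y (inv_into Q e c) / 2)"
    by (rule continuous_map_real_divide[OF continuous_map_coordinate]) auto
  then show "continuous_map (powertop_real UNIV) euclideanreal (\<lambda>y. from_link y c)"
    unfolding from_link_def by (cases "c = v"; cases "c \<in> e ` Q") simp_all
qed

lemma to_link_from_link:
  assumes "y \<in> realization_carrier Q ordQ"
  shows "to_link (from_link y) = y"
proof
  fix q
  have "y q = 0" if "q \<notin> Q" using that assms unfolding realization_carrier_def by blast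
  then show "to_link (from_link y) q = y q"
    by (simp add: to_link_def from_link_vertex from_link_image)
qed

end

context poset_vertex_link
begin

lemma openin_punctured_star:
  "openin (realization P ord) {x \<in> realization_carrier P ord. 0 < x v \<and> x v < 1}"
  using openin_realization_coordinate[of "{0<..<1}" P ord v] by simp

lemma from_link_to_link_in_closed_simplex:
  assumes \<sigma>: "finite \<sigma>" "\<sigma> \<subseteq> P" "is_chain ord \<sigma>"
    and x: "x \<in> closed_simplex P ord \<sigma>" "0 < x v" "x v < 1"
  shows "from_link (to_link x) \<in> closed_simplex P ord \<sigma>"
proof -
  have "from_link (to_link x) \<in> closed_simplex P ord (insert v (e ` {q \<in> Q. e q \<in> \<sigma>}))"
    by (rule from_link_in_closed_simplex[OF link_chain[OF \<sigma>(1,3)] to_link_in_closed_simplex[OF \<sigma> x]])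
  moreover have "v \<in> \<sigma>" using x mem_closed_simplex_iff[OF \<sigma>] by force
  then have "insert v (e ` {q \<in> Q. e q \<in> \<sigma>}) \<subseteq> \<sigma>" using link_face[OF \<sigma>(2,3)] by auto
  ultimately show ?thesis using closed_simplex_mono by blast
qed

lemma continuous_map_to_link_realization:
  "continuous_map (subtopology (realization P ord) {x \<in> realization_carrier P ord. 0 < x v \<and> x v < 1})
     (realization Q ordQ) to_link"
proof (rule continuous_map_into_realization[OF coherent_with_realization_subtopology[OF openin_punctured_star]])
  fix K assume "K \<in> (\<inter>) {x \<in> realization_carrier P ord. 0 < x v \<and> x v < 1} ` closed_simplices P ord"
  then obtain \<sigma> where K: "K = {x \<in> realization_carrier P ord. 0 < x v \<and> x v < 1} \<inter> closed_simplex P ord \<sigma>"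
    and \<sigma>: "finite \<sigma>" "\<sigma> \<subseteq> P" "is_chain ord \<sigma>"
    unfolding closed_simplices_def by blast
  have "to_link ` K \<subseteq> closed_simplex Q ordQ {q \<in> Q. e q \<in> \<sigma>}"
    using to_link_in_closed_simplex[OF \<sigma>] unfolding K by auto
  then show "\<exists>\<tau>. finite \<tau> \<and> \<tau> \<subseteq> Q \<and> is_chain ordQ \<tau> \<and> to_link ` K \<subseteq> closed_simplex Q ordQ \<tau>"
    using link_chain[OF \<sigma>(1,3)] by blast
  show "continuous_map (subtopology (powertop_real UNIV) K) (powertop_real UNIV) to_link"
    by (rule continuous_map_to_link) (auto simp: K)
qed

lemma continuous_map_from_link_realization:
  "continuous_map (realization Q ordQ)
     (subtopology (realization P ord) {x \<in> realization_carrier P ord. 0 < x v \<and> x v < 1}) from_link"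
proof -
  have "continuous_map (realization Q ordQ) (realization P ord) from_link"
  proof (rule continuous_map_into_realization[OF coherent_with_realization])
    fix K assume "K \<in> closed_simplices Q ordQ"
    then obtain \<sigma> where K: "K = closed_simplex Q ordQ \<sigma>" and \<sigma>: "finite \<sigma>" "\<sigma> \<subseteq> Q" "is_chain ordQ \<sigma>"
      unfolding closed_simplices_def by blast
    have "from_link ` K \<subseteq> closed_simplex P ord (insert v (e ` \<sigma>))"
      using from_link_in_closed_simplex[OF \<sigma>] unfolding K by auto
    then show "\<exists>\<tau>. finite \<tau> \<and> \<tau> \<subseteq> P \<and> is_chain ord \<tau> \<and> from_link ` K \<subseteq> closed_simplex P ord \<tau>"
      using cone_chain[OF \<sigma>] by blast
  qed (rule continuous_map_from_subtopology[OF continuous_map_from_link])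
  moreover have "from_link y \<in> realization_carrier P ord" if "y \<in> realization_carrier Q ordQ" for y
    using from_link_in_closed_simplex[OF realization_carrier_support[OF that]]
    unfolding closed_simplex_def by blast
  ultimately show ?thesis
    by (auto simp: continuous_map_in_subtopology topspace_realization from_link_vertex)
qed

lemma homotopic_from_link_to_link_id:
  "homotopic_with (\<lambda>_. True)
     (subtopology (realization P ord) {x \<in> realization_carrier P ord. 0 < x v \<and> x v < 1})
     (subtopology (realization P ord) {x \<in> realization_carrier P ord. 0 < x v \<and> x v < 1})
     (from_link \<circ> to_link) id"
proof (rule homotopic_with_straight_line[OF openin_punctured_star])
  fix \<sigma> x assume \<sigma>: "finite \<sigma>" "\<sigma> \<subseteq> P" "is_chain ord \<sigma>"
    and "x \<in> {x \<in> realization_carrier P ord. 0 < x v \<and> x v < 1} \<inter> closed_simplex P ord \<sigma>"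
  then show "(from_link \<circ> to_link) x \<in> closed_simplex P ord \<sigma>"
    using from_link_to_link_in_closed_simplex[OF \<sigma>] by simp
next
  fix \<sigma>
  show "continuous_map (subtopology (powertop_real UNIV)
      ({x \<in> realization_carrier P ord. 0 < x v \<and> x v < 1} \<inter> closed_simplex P ord \<sigma>))
      (powertop_real UNIV) (from_link \<circ> to_link)"
    by (rule continuous_map_compose[OF continuous_map_to_link continuous_map_from_link]) auto
next
  fix x and t :: real
  assume x: "x \<in> {x \<in> realization_carrier P ord. 0 < x v \<and> x v < 1}" and t: "0 \<le> t" "t \<le> 1"
  then have xC: "x \<in> realization_carrier P ord" and xv: "0 < x v" "x v < 1" by auto
  note supp = realization_carrier_support[OF xC]
  have "(\<lambda>c. (1 - t) * (from_link \<circ> to_link) x c + t * x c) \<in> closed_simplex P ord {c. x c \<noteq> 0}"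
    using closed_simplex_convex[OF supp(1-3) supp(4)
        from_link_to_link_in_closed_simplex[OF supp(1-3) supp(4) xv] t]
    by simp
  moreover have "0 < (1 - t) / 2 + t * x v"
    using t xv by (cases "t = 1") (auto intro: add_pos_nonneg)
  moreover have "(1 - t) / 2 + t * x v < 1"
  proof (cases "t = 0")
    case False
    then have "t * x v < t" using t xv by simp
    moreover have "(1 - t) / 2 \<le> 1 - t" using t by simp
    ultimately show ?thesis by linarith
  qed simp
  ultimately show "(\<lambda>c. (1 - t) * (from_link \<circ> to_link) x c + t * x c)
      \<in> {x \<in> realization_carrier P ord. 0 < x v \<and> x v < 1}"
    unfolding closed_simplex_def by (simp add: from_link_vertex)
qed

theorem homotopy_equivalent_punctured_star:
  "subtopology (realization P ord) {x \<in> realization_carrier P ord. 0 < x v \<and> x v < 1}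
     homotopy_equivalent_space realization Q ordQ"
  unfolding homotopy_equivalent_space_def
proof (intro exI conjI)
  show "homotopic_with (\<lambda>_. True) (realization Q ordQ) (realization Q ordQ) (to_link \<circ> from_link) id"
    by (rule homotopic_with_equal[OF _ _ continuous_map_compose[OF
          continuous_map_from_link_realization continuous_map_to_link_realization]])
      (auto simp: topspace_realization to_link_from_link)
qed (fact continuous_map_to_link_realization continuous_map_from_link_realization
       homotopic_from_link_to_link_id)+

end

section \<open>Homology of a vertex neighbourhood cover\<close>

lemma epi_to_trivial_group:
  assumes "group A" "trivial_group B"
  shows "(\<lambda>_. \<one>\<^bsub>B\<^esub>) \<in> epi A B"
proof -
  have B: "group B" "carrier B = {\<one>\<^bsub>B\<^esub>}" using assms(2) unfolding trivial_group_def by auto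
  have "(\<lambda>_. \<one>\<^bsub>B\<^esub>) \<in> hom A B"
    unfolding hom_def using B group.is_monoid[OF B(1)] by (auto simp: monoid.l_one)
  moreover have "(\<lambda>_. \<one>\<^bsub>B\<^esub>) ` carrier A = carrier B"
    using B group.is_monoid[OF assms(1)] monoid.one_closed by fastforce
  ultimately show ?thesis unfolding epi_def by blast
qed

lemma epi_onto_empty_reduced_homology:
  fixes Z :: "'a topology" and Y :: "'b topology"
  assumes "topspace Y = {}"
  shows "\<exists>f. f \<in> epi (reduced_homology_group m Z) (reduced_homology_group n Y)"
  using epi_to_trivial_group[OF group_reduced_homology_group
      trivial_reduced_homology_group_empty[OF assms]] by blast

lemma epi_of_exact_seq_trivial:
  assumes ex: "exact_seq ([C, B, A], [d, h])" and "trivial_group C"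
  shows "h \<in> epi A B"
proof -
  have "group_hom A B h" "d \<in> hom B C" "kernel B C d = h ` carrier A"
    using ex by auto
  moreover have "kernel B C d = carrier B"
    using \<open>d \<in> hom B C\<close> \<open>trivial_group C\<close> unfolding kernel_def trivial_group_def hom_def by auto
  ultimately show ?thesis unfolding epi_def group_hom_def group_hom_axioms_def by auto
qed

lemma epi_reduced_homology_of_open_cover:
  fixes n :: int
  assumes S: "openin Z S" and U: "openin Z U" and cover: "S \<union> U = topspace Z"
    and contractible: "contractible_space (subtopology Z U)" and "S \<inter> U \<noteq> {}"
    and trivial: "trivial_group (reduced_homology_group n (subtopology Z S))"
  shows "\<exists>f. f \<in> epi (reduced_homology_group (n + 1) Z) (reduced_homology_group n (subtopology Z (S \<inter> U)))"
proof -
  have S_sub: "S \<subseteq> topspace Z" and U_sub: "U \<subseteq> topspace Z" using S U by (auto dest: openin_subset)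
  have "topspace Z \<inter> S \<noteq> {}" using S_sub \<open>S \<inter> U \<noteq> {}\<close> by blast
  then have "exact_seq ([reduced_homology_group n (subtopology Z S), relative_homology_group (n + 1) Z S,
      reduced_homology_group (n + 1) Z], [hom_boundary (n + 1) Z S, hom_induced (n + 1) Z {} Z S id])"
    using homology_exactness_reduced_1[of Z S "n + 1"] by simp
  from epi_of_exact_seq_trivial[OF this trivial]
  have onto_relative: "hom_induced (n + 1) Z {} Z S id
      \<in> epi (reduced_homology_group (n + 1) Z) (relative_homology_group (n + 1) Z S)" .
  have "Z closure_of (topspace Z - U) \<subseteq> Z interior_of S"
    using U cover closure_of_closedin[OF closedin_diff[OF closedin_topspace U]] interior_of_openin[OF S]
    by auto
  moreover have "topspace Z - (topspace Z - U) = U" "S - (topspace Z - U) = S \<inter> U"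
    using S_sub U_sub by auto
  ultimately have "hom_induced (n + 1) (subtopology Z U) (S \<inter> U) (subtopology Z (topspace Z)) S id
      \<in> iso (relative_homology_group (n + 1) (subtopology Z U) (S \<inter> U)) (relative_homology_group (n + 1) Z S)"
    using homology_excision_axiom[of Z "topspace Z - U" S "topspace Z" "n + 1"] S_sub by simp
  then have "relative_homology_group (n + 1) Z S \<cong> relative_homology_group (n + 1) (subtopology Z U) (S \<inter> U)"
    by (rule group.iso_sym[OF group_relative_homology_group is_isoI])
  also have "\<dots> \<cong> reduced_homology_group n (subtopology Z (S \<inter> U))"
  proof (rule is_isoI)
    have "topspace (subtopology Z U) \<inter> (S \<inter> U) \<noteq> {}" using U_sub \<open>S \<inter> U \<noteq> {}\<close> by auto
    from iso_relative_homology_of_contractible[OF contractible this, of "n + 1"]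
    show "hom_boundary (n + 1) (subtopology Z U) (S \<inter> U) \<in> iso (relative_homology_group (n + 1) (subtopology Z U) (S \<inter> U))
        (reduced_homology_group n (subtopology Z (S \<inter> U)))"
      by (simp add: subtopology_subtopology Int_absorb1 Int_commute)
  qed
  finally obtain k where "k \<in> iso (relative_homology_group (n + 1) Z S) (reduced_homology_group n (subtopology Z (S \<inter> U)))"
    unfolding is_iso_def by blast
  then show ?thesis using epi_compose[OF onto_relative] unfolding iso_iff_mon_epi by blast
qed

lemma homotopy_equivalent_space_topspace_nonempty:
  assumes "Z homotopy_equivalent_space Y" "topspace Y \<noteq> {}"
  shows "topspace Z \<noteq> {}"
proof -
  obtain g where "continuous_map Y Z g" using assms(1) unfolding homotopy_equivalent_space_def by blast
  then show ?thesis using assms(2) continuous_map_image_subset_topspace by fastforce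
qed

theorem (in poset_vertex_link) epi_reduced_homology_link:
  fixes n :: int
  assumes "trivial_group (reduced_homology_group n (realization (P - {v}) ord))"
  shows "\<exists>f. f \<in> epi (reduced_homology_group (n + 1) (realization P ord)) (reduced_homology_group n (realization Q ordQ))"
proof (cases "topspace (realization Q ordQ) = {}")
  case True
  then show ?thesis by (rule epi_onto_empty_reduced_homology)
next
  case False
  let ?X = "realization P ord" and ?C = "realization_carrier P ord"
  let ?S = "{x \<in> ?C. x v < 1}" and ?U = "{x \<in> ?C. 0 < x v}"
  have "?S \<inter> ?U = {x \<in> ?C. 0 < x v \<and> x v < 1}" by auto
  then have link: "subtopology ?X (?S \<inter> ?U) homotopy_equivalent_space realization Q ordQ"
    using homotopy_equivalent_punctured_star by simp
  have "reduced_homology_group n (subtopology ?X ?S) \<cong> reduced_homology_group n (realization (P - {v}) ord)"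
    by (rule homotopy_equivalent_space_imp_isomorphic_reduced_homology_groups[OF homotopy_equivalent_vertex_deletion])
  then have trivial: "trivial_group (reduced_homology_group n (subtopology ?X ?S))"
    using isomorphic_group_triviality[OF _ group_reduced_homology_group group_reduced_homology_group] assms
    by blast
  have nonempty: "?S \<inter> ?U \<noteq> {}"
    using homotopy_equivalent_space_topspace_nonempty[OF link False] by auto
  have S: "openin ?X ?S" and U: "openin ?X ?U"
    using openin_realization_coordinate[of "{..<1}" P ord v] openin_realization_coordinate[of "{0<..}" P ord v]
    by simp_all
  have cover: "?S \<union> ?U = topspace ?X" by (auto simp: topspace_realization)
  obtain f where f: "f \<in> epi (reduced_homology_group (n + 1) ?X) (reduced_homology_group n (subtopology ?X (?S \<inter> ?U)))"
    using epi_reduced_homology_of_open_cover[OF S U cover contractible_open_star nonempty trivial] by blast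
  obtain k where "k \<in> iso (reduced_homology_group n (subtopology ?X (?S \<inter> ?U))) (reduced_homology_group n (realization Q ordQ))"
    using homotopy_equivalent_space_imp_isomorphic_reduced_homology_groups[OF link] unfolding is_iso_def by blast
  then show ?thesis using epi_compose[OF f] unfolding iso_iff_mon_epi by blast
qed

section \<open>The coset poset\<close>

lemma (in group) l_coset_subset_l_coset_iff:
  assumes "g \<in> carrier G" "subgroup H G" "subgroup K G"
  shows "g <# H \<subseteq> g <# K \<longleftrightarrow> H \<subseteq> K"
proof
  assume sub: "g <# H \<subseteq> g <# K"
  show "H \<subseteq> K"
  proof
    fix h assume h: "h \<in> H"
    then have "g \<otimes> h \<in> g <# K" using sub unfolding l_coset_def by blast
    then obtain k where "k \<in> K" "g \<otimes> h = g \<otimes> k" unfolding l_coset_def by blast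
    then show "h \<in> K" using assms h subgroup.mem_carrier l_cancel by metis
  qed
qed (auto simp: l_coset_def)

lemma (in group) l_coset_eq_singleton_iff:
  assumes "g \<in> carrier G" "subgroup H G"
  shows "g <# H = {g} \<longleftrightarrow> H = {\<one>}"
proof -
  have "{g} = g <# {\<one>}" using assms(1) by (simp add: l_coset_def)
  then show ?thesis
    using l_coset_subset_l_coset_iff[OF assms(1,2) triv_subgroup]
      l_coset_subset_l_coset_iff[OF assms(1) triv_subgroup assms(2)]
    by (metis subset_antisym order_refl)
qed

lemma (in group) coset_poset_link:
  assumes g: "g \<in> carrier G"
  shows "{c \<in> coset_poset G. c \<noteq> {g} \<and> (c \<subseteq> {g} \<or> {g} \<subseteq> c)} = l_coset G g ` subgroup_poset G"
proof
  show "l_coset G g ` subgroup_poset G \<subseteq> {c \<in> coset_poset G. c \<noteq> {g} \<and> (c \<subseteq> {g} \<or> {g} \<subseteq> c)}"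
  proof
    fix c assume "c \<in> l_coset G g ` subgroup_poset G"
    then obtain H where H: "subgroup H G" "H \<noteq> carrier G" "H \<noteq> {\<one>}" and c: "c = g <# H"
      unfolding subgroup_poset_def by blast
    have "g \<in> c" using g subgroup.one_closed[OF H(1)] unfolding c l_coset_def by force
    then show "c \<in> {c \<in> coset_poset G. c \<noteq> {g} \<and> (c \<subseteq> {g} \<or> {g} \<subseteq> c)}"
      using H g l_coset_eq_singleton_iff unfolding c coset_poset_def by blast
  qed
  show "{c \<in> coset_poset G. c \<noteq> {g} \<and> (c \<subseteq> {g} \<or> {g} \<subseteq> c)} \<subseteq> l_coset G g ` subgroup_poset G"
  proof
    fix c assume c: "c \<in> {c \<in> coset_poset G. c \<noteq> {g} \<and> (c \<subseteq> {g} \<or> {g} \<subseteq> c)}"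
    then obtain a K where K: "c = a <# K" "a \<in> carrier G" "subgroup K G" "K \<noteq> carrier G"
      unfolding coset_poset_def by blast
    have "a \<in> c" using K subgroup.one_closed[OF K(3)] unfolding l_coset_def by force
    then have "g \<in> c" using c by blast
    then have "c = g <# K" using l_repr_independence K by blast
    moreover have "K \<noteq> {\<one>}" using c l_coset_eq_singleton_iff[OF g K(3)] calculation by blast
    ultimately show "c \<in> l_coset G g ` subgroup_poset G"
      using K unfolding subgroup_poset_def by blast
  qed
qed

lemma (in group) singleton_in_coset_poset:
  assumes "g \<in> carrier G" "subgroup_poset G \<noteq> {}"
  shows "{g} \<in> coset_poset G"
proof -
  obtain H where H: "subgroup H G" "H \<noteq> {\<one>}" using assms(2) unfolding subgroup_poset_def by blast
  then have "{\<one>} \<noteq> carrier G" using subgroup.subset subgroup.one_closed by blast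
  moreover have "{g} = g <# {\<one>}" using assms(1) by (simp add: l_coset_def)
  ultimately show ?thesis unfolding coset_poset_def using assms(1) triv_subgroup by blast
qed

lemma (in group) poset_vertex_link_coset_poset:
  assumes "g \<in> carrier G" "subgroup_poset G \<noteq> {}"
  shows "poset_vertex_link (coset_poset G) (\<subseteq>) {g} (subgroup_poset G) (\<subseteq>) (l_coset G g)"
proof unfold_locales
  have embedding: "H \<subseteq> K \<longleftrightarrow> g <# H \<subseteq> g <# K" if "H \<in> subgroup_poset G" "K \<in> subgroup_poset G" for H K
    using that l_coset_subset_l_coset_iff[OF assms(1)] unfolding subgroup_poset_def by blast
  then show "H \<subseteq> K \<longleftrightarrow> g <# H \<subseteq> g <# K" if "H \<in> subgroup_poset G" "K \<in> subgroup_poset G" for H K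
    using that .
  show "inj_on (l_coset G g) (subgroup_poset G)"
    by (rule inj_onI) (use embedding in blast)
  show "{g} \<in> coset_poset G" by (rule singleton_in_coset_poset[OF assms])
  show "l_coset G g ` subgroup_poset G = {c \<in> coset_poset G. c \<noteq> {g} \<and> (c \<subseteq> {g} \<or> {g} \<subseteq> c)}"
    using coset_poset_link[OF assms(1)] by simp
qed simp

theorem mainTheorem11:
  fixes G :: "('a, 'b) monoid_scheme" and g :: 'a and n :: nat
  assumes "group G"
    and "g \<in> carrier G"
    and "carrier (reduced_homology_group (int n)
            (realization (coset_poset G - {{g}}) (\<subseteq>)))
         = {\<one>\<^bsub>reduced_homology_group (int n) (realization (coset_poset G - {{g}}) (\<subseteq>))\<^esub>}"
  shows "\<exists>f. f \<in> epi (reduced_homology_group (int n + 1) (realization (coset_poset G) (\<subseteq>)))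
                     (reduced_homology_group (int n) (realization (subgroup_poset G) (\<subseteq>)))"
proof (cases "subgroup_poset G = {}")
  case True
  then show ?thesis
    by (intro epi_onto_empty_reduced_homology) (auto simp: topspace_realization realization_carrier_def)
next
  case False
  interpret poset_vertex_link "coset_poset G" "(\<subseteq>)" "{g}" "subgroup_poset G" "(\<subseteq>)" "l_coset G g"
    by (rule group.poset_vertex_link_coset_poset[OF assms(1,2) False])
  have "trivial_group (reduced_homology_group (int n) (realization (coset_poset G - {{g}}) (\<subseteq>)))"
    using assms(3) group_reduced_homology_group unfolding trivial_group_def by blast
  then show ?thesis by (rule epi_reduced_homology_link)
qed

end
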